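(* Let $n\ge1$ be an integer. For every valid configuration $c\in\Omega'_n$, there exist two strictly increasing sequences $A,B:\mathbb Z\to\mathbb Z$ such that: (1) the set of positions of junction tiles in $c$ is the Cartesian product $c^{-1}(J'_n)=A(\mathbb Z)\times B(\mathbb Z)$; (2) $A(k+1)-A(k)\in\{n,n+1\}$ for every $k\in\mathbb Z$; (3) $B(k+1)-B(k)\in\{n,n+1\}$ for every $k\in\mathbb Z$.
   Context: $V_n=\{(v_0,v_1,v_2)\in\mathbb{Z}^3: 0\le v_0\le v_1\le 1,\ v_1\le v_2\le n+1\}$, elements written as words $v_0v_1v_2$. A Wang tile is $t=(a,b,c,d)$ with $\mathrm{RIGHT}(t)=a$, $\mathrm{TOP}(t)=b$, $\mathrm{LEFT}(t)=c$, $\mathrm{BOTTOM}(t)=d$; $\hat t=(b,a,d,c)$, $\hat S=\{\hat t:t\in S\}$. Define (as (right, top, left, bottom)): $W_n=\{(11(i+1),11(j+1),11i,11j):1\le i,j\le n\}$; $B'_n=\{(00(i+1),111,00i,11n):0\le i\le n\}$; $G_n=\{(01(i+1),111,00i,11(n+1)):0\le i\le n\}$; $Y_n=\{(01(i+1),112,01i,11(n+1)):1\le i\le n\}$; $A_n=\{(00(i+1),112,01i,11n):1\le i\le n\}$; $J'_n=\{((0,k,l),(0,r,s),(0,s,r+n),(0,l,k+n)):(k,l),(r,s)\in\{(0,0),(0,1),(1,1)\}\}$ (junction tiles). $\mathcal T'_n=W_n\cup B'_n\cup G_n\cup Y_n\cup A_n\cup\hat B'_n\cup\hat G_n\cup\hat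 Y_n\cup\hat A_n\cup J'_n$. $\Omega'_n$ is the set of configurations $c:\mathbb Z^2\to\mathcal T'_n$ with $\mathrm{RIGHT}(c(\mathbf m))=\mathrm{LEFT}(c(\mathbf m+\mathbf e_1))$ and $\mathrm{TOP}(c(\mathbf m))=\mathrm{BOTTOM}(c(\mathbf m+\mathbf e_2))$ for all $\mathbf m$. *)

theory Defs
  imports Main
begin

type_synonym label = "int \<times> int \<times> int"
type_synonym tile = "label \<times> label \<times> label \<times> label"

definition V :: "nat \<Rightarrow> label set" where
  "V n = {(v0, v1, v2). 0 \<le> v0 \<and> v0 \<le> v1 \<and> v1 \<le> 1 \<and> v1 \<le> v2 \<and> v2 \<le> int n + 1}"

definition RIGHT :: "tile \<Rightarrow> label" where "RIGHT t = fst t"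
definition TOP :: "tile \<Rightarrow> label" where "TOP t = fst (snd t)"
definition LEFT :: "tile \<Rightarrow> label" where "LEFT t = fst (snd (snd t))"
definition BOTTOM :: "tile \<Rightarrow> label" where "BOTTOM t = snd (snd (snd t))"

definition hat :: "tile \<Rightarrow> tile" where
  "hat t = (case t of (a, b, c, d) \<Rightarrow> (b, a, d, c))"

definition W :: "nat \<Rightarrow> tile set" where
  "W n = {((1,1,i+1), (1,1,j+1), (1,1,i), (1,1,j)) | i j. 1 \<le> i \<and> i \<le> int n \<and> 1 \<le> j \<and> j \<le> int n}"

definition B' :: "nat \<Rightarrow> tile set" where
  "B' n = {((0,0,i+1), (1,1,1), (0,0,i), (1,1,int n)) | i. 0 \<le> i \<and> i \<le> int n}"

definition G :: "nat \<Rightarrow> tile set" where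
  "G n = {((0,1,i+1), (1,1,1), (0,0,i), (1,1,int n + 1)) | i. 0 \<le> i \<and> i \<le> int n}"

definition Y :: "nat \<Rightarrow> tile set" where
  "Y n = {((0,1,i+1), (1,1,2), (0,1,i), (1,1,int n + 1)) | i. 1 \<le> i \<and> i \<le> int n}"

definition A :: "nat \<Rightarrow> tile set" where
  "A n = {((0,0,i+1), (1,1,2), (0,1,i), (1,1,int n)) | i. 1 \<le> i \<and> i \<le> int n}"

definition kl_pairs :: "(int \<times> int) set" where
  "kl_pairs = {(0,0), (0,1), (1,1)}"

definition J' :: "nat \<Rightarrow> tile set" where
  "J' n = {((0,k,l), (0,r,s), (0,s,r + int n), (0,l,k + int n)) | k l r s.
             (k, l) \<in> kl_pairs \<and> (r, s) \<in> kl_pairs}"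

definition T' :: "nat \<Rightarrow> tile set" where
  "T' n = W n \<union> B' n \<union> G n \<union> Y n \<union> A n
          \<union> hat ` B' n \<union> hat ` G n \<union> hat ` Y n \<union> hat ` A n \<union> J' n"

definition Omega' :: "nat \<Rightarrow> (int \<times> int \<Rightarrow> tile) set" where
  "Omega' n = {c. (\<forall>m. c m \<in> T' n) \<and>
     (\<forall>x y. RIGHT (c (x, y)) = LEFT (c (x + 1, y))) \<and>
     (\<forall>x y. TOP (c (x, y)) = BOTTOM (c (x, y + 1)))}"

end

theory Submission
  imports Defs "HOL-Library.Infinite_Set"
begin

text \<open>The first digit v0 of a label is constant along each column on top and bottom edges and
  along each row on left and right edges, and a tile is a junction tile exactly when its top and
  right labels both have v0 = 0; so the junction positions are the product of a set of junction
  columns and a set of junction rows. Across every ordinary column the last digit v2 of the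
  left/right labels grows by one, while it stays in [0, n + 1]; hence junction columns occur with
  gaps at most n + 2. Between consecutive junction columns a < b the digit v2 climbs from at most 1
  to at least n along a junction row, and from at least 1 to at most n + 1 along an ordinary row,
  so b - a is n or n + 1. An ordinary row exists: otherwise the middle digit v1 of the right labels
  would be 0 at a junction column and, moving diagonally, at every column to its right,
  contradicting v1 = 1 on the left labels of the next junction column. Swapping the coordinates
  and applying hat to every tile turns rows into columns, so only columns need to be studied.\<close>

lemma strict_monoI_int_succ:
  fixes f :: "int \<Rightarrow> int"
  assumes step: "\<And>k. f k < f (k + 1)"
  shows "strict_mono f"
proof
  fix x y :: int
  assume "x < y"
  then show "f x < f y"
  proof (induction y rule: int_gr_induct)
    case base
    then show ?case using step .
  next
    case (step y)
    then show ?case using assms[of y] by linarith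
  qed
qed

lemma enumerate_int_set_from:
  fixes S :: "int set"
  assumes "x0 \<in> S" and unbounded: "\<forall>a. \<exists>b\<in>S. a < b"
  obtains g :: "nat \<Rightarrow> int" where "strict_mono g" "g 0 = x0" "range g = S \<inter> {x0..}"
proof
  define N where "N = {m. x0 + int m \<in> S}"
  have "infinite N"
    unfolding infinite_nat_iff_unbounded
  proof
    fix m
    obtain b where "b \<in> S" "x0 + int m < b" using unbounded by blast
    then show "\<exists>m'>m. m' \<in> N" by (auto simp: N_def intro!: exI[of _ "nat (b - x0)"])
  qed
  show "strict_mono (\<lambda>m. x0 + int (enumerate N m))"
    using strict_mono_enumerate[OF \<open>infinite N\<close>] by (simp add: strict_mono_def)
  show "x0 + int (enumerate N 0) = x0"
    using \<open>x0 \<in> S\<close> by (simp add: enumerate_0 N_def)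
  have "S \<inter> {x0..} = (\<lambda>m. x0 + int m) ` N"
  proof (intro equalityI subsetI)
    fix x assume "x \<in> S \<inter> {x0..}"
    then show "x \<in> (\<lambda>m. x0 + int m) ` N"
      by (auto simp: N_def image_iff intro!: exI[of _ "nat (x - x0)"])
  qed (auto simp: N_def)
  then show "range (\<lambda>m. x0 + int (enumerate N m)) = S \<inter> {x0..}"
    using range_enumerate[OF \<open>infinite N\<close>] by (metis image_image)
qed

lemma strict_mono_not_in_range_between:
  fixes f :: "int \<Rightarrow> 'a::linorder"
  assumes "strict_mono f" and "f k < z" "z < f (k + 1)"
  shows "z \<notin> range f"
proof
  assume "z \<in> range f"
  then obtain j where "z = f j" by blast
  with assms have "k < j" "j < k + 1" using strict_mono_less[OF assms(1)] by simp_all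
  then show False by simp
qed

lemma enumerate_int_set:
  fixes S :: "int set"
  assumes up: "\<forall>a. \<exists>b\<in>S. a < b" and down: "\<forall>a. \<exists>b\<in>S. b < a"
  obtains f :: "int \<Rightarrow> int" where "strict_mono f" "range f = S"
proof -
  obtain x0 where "x0 \<in> S" using up by blast
  obtain g :: "nat \<Rightarrow> int" where g: "strict_mono g" "g 0 = x0" "range g = S \<inter> {x0..}"
    using enumerate_int_set_from[OF \<open>x0 \<in> S\<close> up] by blast
  have "\<forall>a. \<exists>b\<in>uminus ` S. a < b"
  proof
    fix a
    obtain b where "b \<in> S" "b < - a" using down by blast
    then show "\<exists>b\<in>uminus ` S. a < b" by force
  qed
  moreover have "- x0 \<in> uminus ` S" using \<open>x0 \<in> S\<close> by blast
  ultimately obtain h :: "nat \<Rightarrow> int"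
    where h: "strict_mono h" "h 0 = - x0" "range h = uminus ` S \<inter> {- x0..}"
    using enumerate_int_set_from by metis
  define f where "f k = (if 0 \<le> k then g (nat k) else - h (nat (- k)))" for k
  have "strict_mono f"
  proof (rule strict_monoI_int_succ)
    fix k :: int
    show "f k < f (k + 1)"
    proof (cases "0 \<le> k")
      case True
      then show ?thesis using strict_monoD[OF g(1), of "nat k" "nat (k + 1)"] by (simp add: f_def)
    next
      case False
      then have "h (nat (- (k + 1))) < h (nat (- k))"
        using strict_monoD[OF h(1)] by simp
      then show ?thesis using False g(2) h(2) by (auto simp: f_def)
    qed
  qed
  moreover have "range f = range g \<union> uminus ` range h"
  proof
    show "range f \<subseteq> range g \<union> uminus ` range h"
      by (auto simp: f_def)
    have "f (int m) = g m" "f (- int m) = - h m" for m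
      using g(2) h(2) by (auto simp: f_def)
    then show "range g \<union> uminus ` range h \<subseteq> range f"
      by (auto, metis rangeI, metis rangeI)
  qed
  moreover have "range g \<union> uminus ` range h = S"
    unfolding g(3) h(3) by force
  ultimately show thesis using that by blast
qed

definition v0 :: "label \<Rightarrow> int" where "v0 v = fst v"
definition v1 :: "label \<Rightarrow> int" where "v1 v = fst (snd v)"
definition v2 :: "label \<Rightarrow> int" where "v2 v = snd (snd v)"

lemma label_digit_simps [simp]: "v0 (a, b, d) = a" "v1 (a, b, d) = b" "v2 (a, b, d) = d"
  by (simp_all add: v0_def v1_def v2_def)

lemma tile_sides [simp]:
  "RIGHT (a, b, c, d) = a" "TOP (a, b, c, d) = b" "LEFT (a, b, c, d) = c" "BOTTOM (a, b, c, d) = d"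
  by (simp_all add: RIGHT_def TOP_def LEFT_def BOTTOM_def)

lemma hat_sides [simp]:
  "RIGHT (hat t) = TOP t" "TOP (hat t) = RIGHT t" "LEFT (hat t) = BOTTOM t" "BOTTOM (hat t) = LEFT t"
  by (cases t; simp add: hat_def)+

lemma T'_cases [consumes 1, case_names W B' G Y A hat_B' hat_G hat_Y hat_A J']:
  assumes "t \<in> T' n"
  and "\<And>i j. t = ((1,1,i+1), (1,1,j+1), (1,1,i), (1,1,j)) \<Longrightarrow>
          1 \<le> i \<Longrightarrow> i \<le> int n \<Longrightarrow> 1 \<le> j \<Longrightarrow> j \<le> int n \<Longrightarrow> P"
  and "\<And>i. t = ((0,0,i+1), (1,1,1), (0,0,i), (1,1,int n)) \<Longrightarrow> 0 \<le> i \<Longrightarrow> i \<le> int n \<Longrightarrow> P"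
  and "\<And>i. t = ((0,1,i+1), (1,1,1), (0,0,i), (1,1,int n + 1)) \<Longrightarrow> 0 \<le> i \<Longrightarrow> i \<le> int n \<Longrightarrow> P"
  and "\<And>i. t = ((0,1,i+1), (1,1,2), (0,1,i), (1,1,int n + 1)) \<Longrightarrow> 1 \<le> i \<Longrightarrow> i \<le> int n \<Longrightarrow> P"
  and "\<And>i. t = ((0,0,i+1), (1,1,2), (0,1,i), (1,1,int n)) \<Longrightarrow> 1 \<le> i \<Longrightarrow> i \<le> int n \<Longrightarrow> P"
  and "\<And>i. t = ((1,1,1), (0,0,i+1), (1,1,int n), (0,0,i)) \<Longrightarrow> 0 \<le> i \<Longrightarrow> i \<le> int n \<Longrightarrow> P"
  and "\<And>i. t = ((1,1,1), (0,1,i+1), (1,1,int n + 1), (0,0,i)) \<Longrightarrow> 0 \<le> i \<Longrightarrow> i \<le> int n \<Longrightarrow> P"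
  and "\<And>i. t = ((1,1,2), (0,1,i+1), (1,1,int n + 1), (0,1,i)) \<Longrightarrow> 1 \<le> i \<Longrightarrow> i \<le> int n \<Longrightarrow> P"
  and "\<And>i. t = ((1,1,2), (0,0,i+1), (1,1,int n), (0,1,i)) \<Longrightarrow> 1 \<le> i \<Longrightarrow> i \<le> int n \<Longrightarrow> P"
  and "\<And>k l r s. t = ((0,k,l), (0,r,s), (0,s,r + int n), (0,l,k + int n)) \<Longrightarrow>
          (k, l) \<in> kl_pairs \<Longrightarrow> (r, s) \<in> kl_pairs \<Longrightarrow> P"
  shows P
  using assms(1) unfolding T'_def
  apply (elim UnE imageE)
  apply (auto simp: W_def intro: assms(2))[1]
  apply (auto simp: B'_def intro: assms(3))[1]
  apply (auto simp: G_def intro: assms(4))[1]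
  apply (auto simp: Y_def intro: assms(5))[1]
  apply (auto simp: A_def intro: assms(6))[1]
  apply (auto simp: B'_def hat_def intro: assms(7))[1]
  apply (auto simp: G_def hat_def intro: assms(8))[1]
  apply (auto simp: Y_def hat_def intro: assms(9))[1]
  apply (auto simp: A_def hat_def intro: assms(10))[1]
  apply (auto simp: J'_def intro: assms(11))[1]
  done

lemma T'_sides_in_V:
  assumes "1 \<le> n" and "t \<in> T' n"
  shows "RIGHT t \<in> V n \<and> TOP t \<in> V n \<and> LEFT t \<in> V n \<and> BOTTOM t \<in> V n"
  using assms(2) by (cases rule: T'_cases) (use assms(1) in \<open>auto simp: V_def kl_pairs_def\<close>)

lemma V_bounds: "v \<in> V n \<Longrightarrow> 0 \<le> v1 v \<and> v1 v \<le> 1 \<and> 0 \<le> v2 v \<and> v2 v \<le> int n + 1"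
  by (cases v) (auto simp: V_def)

lemma T'_v0_opposite_sides: "t \<in> T' n \<Longrightarrow> v0 (LEFT t) = v0 (RIGHT t) \<and> v0 (BOTTOM t) = v0 (TOP t)"
  by (erule T'_cases) simp_all

lemma T'_in_J'_iff: "t \<in> T' n \<Longrightarrow> t \<in> J' n \<longleftrightarrow> v0 (RIGHT t) = 0 \<and> v0 (TOP t) = 0"
  by (erule T'_cases) (auto simp: J'_def)

lemma T'_v2_RIGHT_step: "t \<in> T' n \<Longrightarrow> v0 (TOP t) \<noteq> 0 \<Longrightarrow> v2 (RIGHT t) = v2 (LEFT t) + 1"
  by (erule T'_cases) simp_all

lemma T'_v2_TOP_BOTTOM:
  "t \<in> T' n \<Longrightarrow> v0 (TOP t) \<noteq> 0 \<Longrightarrow> v0 (RIGHT t) = 0 \<Longrightarrow>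
     v2 (TOP t) = v1 (LEFT t) + 1 \<and> v2 (BOTTOM t) = v1 (RIGHT t) + int n"
  by (erule T'_cases) simp_all

lemma T'_v2_RIGHT_pos: "t \<in> T' n \<Longrightarrow> v0 (TOP t) = 0 \<Longrightarrow> v0 (RIGHT t) \<noteq> 0 \<Longrightarrow> 1 \<le> v2 (RIGHT t)"
  by (erule T'_cases) simp_all

lemma J'_v2_sides:
  "t \<in> J' n \<Longrightarrow> v2 (RIGHT t) \<le> 1 \<and> int n \<le> v2 (LEFT t)
     \<and> v2 (TOP t) = v1 (LEFT t) \<and> v2 (BOTTOM t) = v1 (RIGHT t) + int n"
  by (auto simp: J'_def kl_pairs_def)

lemma hat_in_T': "t \<in> T' n \<Longrightarrow> hat t \<in> T' n"
proof -
  have "hat (hat t) = t" for t by (cases t) (simp add: hat_def)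
  moreover have "hat ` W n \<subseteq> W n" "hat ` J' n \<subseteq> J' n"
    by (force simp: W_def J'_def hat_def)+
  ultimately show "t \<in> T' n \<Longrightarrow> hat t \<in> T' n"
    unfolding T'_def by (auto simp: image_subset_iff)
qed

lemma Omega'D:
  assumes "c \<in> Omega' n"
  shows Omega'_in_T': "c p \<in> T' n"
    and Omega'_match_h: "RIGHT (c (x, y)) = LEFT (c (x + 1, y))"
    and Omega'_match_v: "TOP (c (x, y)) = BOTTOM (c (x, y + 1))"
  using assms unfolding Omega'_def by blast+

definition transpose_config :: "(int \<times> int \<Rightarrow> tile) \<Rightarrow> int \<times> int \<Rightarrow> tile" where
  "transpose_config c = (\<lambda>(x, y). hat (c (y, x)))"

lemma transpose_config_apply [simp]: "transpose_config c (x, y) = hat (c (y, x))"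
  by (simp add: transpose_config_def)

lemma transpose_config_in_Omega':
  assumes c: "c \<in> Omega' n"
  shows "transpose_config c \<in> Omega' n"
  unfolding Omega'_def
proof (intro CollectI conjI allI)
  fix p
  show "transpose_config c p \<in> T' n"
    using hat_in_T'[OF Omega'_in_T'[OF c]] by (cases p) simp
next
  fix x y
  show "RIGHT (transpose_config c (x, y)) = LEFT (transpose_config c (x + 1, y))"
    using Omega'_match_v[OF c, of y x] by simp
  show "TOP (transpose_config c (x, y)) = BOTTOM (transpose_config c (x, y + 1))"
    using Omega'_match_h[OF c, of y x] by simp
qed

definition junction_col :: "(int \<times> int \<Rightarrow> tile) \<Rightarrow> int \<Rightarrow> bool" where
  "junction_col c x \<longleftrightarrow> v0 (TOP (c (x, 0))) = 0"

definition junction_row :: "(int \<times> int \<Rightarrow> tile) \<Rightarrow> int \<Rightarrow> bool" where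
  "junction_row c y \<longleftrightarrow> v0 (RIGHT (c (0, y))) = 0"

lemma junction_col_transpose_config [simp]: "junction_col (transpose_config c) = junction_row c"
  by (simp add: fun_eq_iff junction_col_def junction_row_def)

lemma v0_TOP_eq_0_iff:
  assumes c: "c \<in> Omega' n"
  shows "v0 (TOP (c (x, y))) = 0 \<longleftrightarrow> junction_col c x"
proof -
  have step: "v0 (TOP (c (x, y + 1))) = v0 (TOP (c (x, y)))" for y
    using T'_v0_opposite_sides[OF Omega'_in_T'[OF c]] Omega'_match_v[OF c] by metis
  have "v0 (TOP (c (x, y))) = v0 (TOP (c (x, 0)))"
    by (induction y rule: int_induct[where k = 0]) (use step in \<open>simp_all\<close>, metis step diff_add_cancel)
  then show ?thesis by (simp add: junction_col_def)
qed

lemma v0_RIGHT_eq_0_iff: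
  assumes "c \<in> Omega' n"
  shows "v0 (RIGHT (c (x, y))) = 0 \<longleftrightarrow> junction_row c y"
  using v0_TOP_eq_0_iff[OF transpose_config_in_Omega'[OF assms], of y x] by simp

lemma junction_tile_iff:
  assumes "c \<in> Omega' n"
  shows "c (x, y) \<in> J' n \<longleftrightarrow> junction_col c x \<and> junction_row c y"
  using T'_in_J'_iff[OF Omega'_in_T'[OF assms]] v0_TOP_eq_0_iff[OF assms] v0_RIGHT_eq_0_iff[OF assms]
  by blast

lemma v2_across_ordinary_cols:
  assumes c: "c \<in> Omega' n" and "a < b"
    and ordinary: "\<forall>z. a < z \<and> z < b \<longrightarrow> \<not> junction_col c z"
  shows "v2 (LEFT (c (b, y))) = v2 (RIGHT (c (a, y))) + (b - a - 1)"
  using \<open>a < b\<close> ordinary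
proof (induction b rule: int_gr_induct)
  case base
  then show ?case using Omega'_match_h[OF c, of a y] by simp
next
  case (step b)
  have "v0 (TOP (c (b, y))) \<noteq> 0"
    using step.hyps step.prems v0_TOP_eq_0_iff[OF c] by simp
  then have "v2 (RIGHT (c (b, y))) = v2 (LEFT (c (b, y))) + 1"
    by (rule T'_v2_RIGHT_step[OF Omega'_in_T'[OF c]])
  moreover have "v2 (LEFT (c (b, y))) = v2 (RIGHT (c (a, y))) + (b - a - 1)"
    using step.IH step.prems by simp
  ultimately show ?case using Omega'_match_h[OF c, of b y] by simp
qed

lemma Omega'_label_bounds:
  assumes "1 \<le> n" and c: "c \<in> Omega' n"
  shows "0 \<le> v1 (RIGHT (c p)) \<and> v1 (LEFT (c p)) \<le> 1
    \<and> 0 \<le> v2 (RIGHT (c p)) \<and> v2 (LEFT (c p)) \<le> int n + 1"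
  using T'_sides_in_V[OF assms(1) Omega'_in_T'[OF c]] V_bounds by blast

lemma exists_junction_col_after:
  assumes "1 \<le> n" and c: "c \<in> Omega' n"
  shows "\<exists>z. a < z \<and> z \<le> a + int n + 2 \<and> junction_col c z"
proof (rule ccontr)
  assume "\<not> ?thesis"
  then have "\<forall>z. a < z \<and> z < a + int n + 3 \<longrightarrow> \<not> junction_col c z"
    by auto
  from v2_across_ordinary_cols[OF c _ this]
  have "v2 (LEFT (c (a + int n + 3, 0))) = v2 (RIGHT (c (a, 0))) + (int n + 2)"
    by simp
  then show False
    using Omega'_label_bounds[OF assms, of "(a, 0)"] Omega'_label_bounds[OF assms, of "(a + int n + 3, 0)"]
    by linarith
qed

lemma exists_junction_row:
  assumes "1 \<le> n" and "c \<in> Omega' n"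
  shows "\<exists>y. junction_row c y"
  using exists_junction_col_after[OF assms(1) transpose_config_in_Omega'[OF assms(2)]] by auto

lemma junction_col_v1_if_all_junction_rows:
  assumes "1 \<le> n" and c: "c \<in> Omega' n"
    and rows: "\<forall>y. junction_row c y" and "junction_col c x"
  shows "int n = 1 \<and> v1 (RIGHT (c (x, y))) = 0 \<and> v1 (LEFT (c (x, y))) = 1"
proof -
  have J: "c (x, y') \<in> J' n" for y'
    using junction_tile_iff[OF c] rows \<open>junction_col c x\<close> by blast
  have "int n = 1 \<and> v1 (RIGHT (c (x, y' + 1))) = 0 \<and> v1 (LEFT (c (x, y'))) = 1" for y'
  proof -
    have "v1 (LEFT (c (x, y'))) = v1 (RIGHT (c (x, y' + 1))) + int n"
      using J'_v2_sides[OF J[of y']] J'_v2_sides[OF J[of "y' + 1"]] Omega'_match_v[OF c, of x y']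
      by simp
    moreover have "v1 (LEFT (c (x, y'))) \<le> 1" "0 \<le> v1 (RIGHT (c (x, y' + 1)))"
      using Omega'_label_bounds[OF assms(1,2)] by blast+
    ultimately show ?thesis using \<open>1 \<le> n\<close> by linarith
  qed
  from this[of "y - 1"] this[of y] show ?thesis by simp
qed

lemma exists_ordinary_row:
  assumes "1 \<le> n" and c: "c \<in> Omega' n"
  shows "\<exists>y. \<not> junction_row c y"
proof (rule ccontr)
  assume "\<not> ?thesis"
  then have rows: "\<forall>y. junction_row c y" by blast
  obtain a where "junction_col c a"
    using exists_junction_col_after[OF assms] by blast
  have "v1 (RIGHT (c (x, y))) = 0" if "a \<le> x" for x y
    using that
  proof (induction x arbitrary: y rule: int_ge_induct)
    case base
    show ?case using junction_col_v1_if_all_junction_rows[OF assms rows \<open>junction_col c a\<close>] by blast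
  next
    case (step x)
    show ?case
    proof (cases "junction_col c (x + 1)")
      case True
      then show ?thesis using junction_col_v1_if_all_junction_rows[OF assms rows] by blast
    next
      case False
      have "int n = 1"
        using junction_col_v1_if_all_junction_rows[OF assms rows \<open>junction_col c a\<close>] by blast
      have "v0 (TOP (c (x + 1, y'))) \<noteq> 0" "v0 (RIGHT (c (x + 1, y'))) = 0" for y'
        using False rows v0_TOP_eq_0_iff[OF c] v0_RIGHT_eq_0_iff[OF c] by auto
      then have "v2 (TOP (c (x + 1, y - 1))) = v1 (LEFT (c (x + 1, y - 1))) + 1"
        "v2 (BOTTOM (c (x + 1, y))) = v1 (RIGHT (c (x + 1, y))) + int n"
        using T'_v2_TOP_BOTTOM[OF Omega'_in_T'[OF c]] by blast+
      moreover have "TOP (c (x + 1, y - 1)) = BOTTOM (c (x + 1, y))"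
        using Omega'_match_v[OF c, of "x + 1" "y - 1"] by simp
      moreover have "v1 (LEFT (c (x + 1, y - 1))) = 0"
        using step.IH[of "y - 1"] by (simp add: Omega'_match_h[OF c, symmetric])
      ultimately show ?thesis using \<open>int n = 1\<close> by simp
    qed
  qed
  moreover obtain b where "a < b" "junction_col c b"
    using exists_junction_col_after[OF assms] by blast
  ultimately have "v1 (RIGHT (c (b - 1, 0))) = 0" by simp
  then have "v1 (LEFT (c (b, 0))) = 0"
    using Omega'_match_h[OF c, of "b - 1" 0] by simp
  then show False
    using junction_col_v1_if_all_junction_rows[OF assms rows \<open>junction_col c b\<close>] by simp
qed

lemma junction_col_gap:
  assumes "1 \<le> n" and c: "c \<in> Omega' n"
    and "junction_col c a" "junction_col c b" "a < b"
    and between: "\<forall>z. a < z \<and> z < b \<longrightarrow> \<not> junction_col c z"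
  shows "b - a \<in> {int n, int n + 1}"
proof -
  have count: "v2 (LEFT (c (b, y))) = v2 (RIGHT (c (a, y))) + (b - a - 1)" for y
    using v2_across_ordinary_cols[OF c \<open>a < b\<close> between] .
  obtain y0 where "junction_row c y0"
    using exists_junction_row[OF assms(1,2)] by blast
  then have "c (a, y0) \<in> J' n" "c (b, y0) \<in> J' n"
    using junction_tile_iff[OF c] assms(3,4) by blast+
  then have "v2 (RIGHT (c (a, y0))) \<le> 1" "int n \<le> v2 (LEFT (c (b, y0)))"
    using J'_v2_sides by blast+
  with count[of y0] have "int n \<le> b - a" by linarith
  obtain y1 where "\<not> junction_row c y1"
    using exists_ordinary_row[OF assms(1,2)] by blast
  then have "1 \<le> v2 (RIGHT (c (a, y1)))"
    using T'_v2_RIGHT_pos[OF Omega'_in_T'[OF c]] assms(3) v0_TOP_eq_0_iff[OF c] v0_RIGHT_eq_0_iff[OF c]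
    by blast
  then have "b - a \<le> int n + 1"
    using Omega'_label_bounds[OF assms(1,2), of "(b, y1)"] count[of y1] by linarith
  with \<open>int n \<le> b - a\<close> show ?thesis by auto
qed

lemma junction_cols_enumeration:
  assumes "1 \<le> n" and c: "c \<in> Omega' n"
  obtains f :: "int \<Rightarrow> int"
  where "strict_mono f" "range f = Collect (junction_col c)"
    and "\<And>k. f (k + 1) - f k \<in> {int n, int n + 1}"
proof -
  have "\<forall>a. \<exists>b\<in>Collect (junction_col c). a < b"
    using exists_junction_col_after[OF assms] by blast
  moreover have "\<forall>a. \<exists>b\<in>Collect (junction_col c). b < a"
  proof
    fix a
    obtain z where "a - int n - 3 < z" "z \<le> a - int n - 3 + int n + 2" "junction_col c z"
      using exists_junction_col_after[OF assms] by blast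
    then show "\<exists>b\<in>Collect (junction_col c). b < a" by auto
  qed
  ultimately obtain f :: "int \<Rightarrow> int" where f: "strict_mono f" "range f = Collect (junction_col c)"
    using enumerate_int_set by blast
  have "f (k + 1) - f k \<in> {int n, int n + 1}" for k
  proof (rule junction_col_gap[OF assms])
    show "junction_col c (f k)" "junction_col c (f (k + 1))" using f(2) by auto
    show "f k < f (k + 1)" using strict_monoD[OF f(1)] by simp
    show "\<forall>z. f k < z \<and> z < f (k + 1) \<longrightarrow> \<not> junction_col c z"
      using strict_mono_not_in_range_between[OF f(1)] f(2) by blast
  qed
  with f show thesis using that by blast
qed

theorem lemma6p3:
  fixes n :: nat and c :: "int \<times> int \<Rightarrow> tile"
  assumes "n \<ge> 1" and "c \<in> Omega' n"
  shows "\<exists>(SA :: int \<Rightarrow> int) (SB :: int \<Rightarrow> int). strict_mono SA \<and> strict_mono SB \<and>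
           c -` J' n = range SA \<times> range SB \<and>
           (\<forall>k. SA (k + 1) - SA k \<in> {int n, int n + 1}) \<and>
           (\<forall>k. SB (k + 1) - SB k \<in> {int n, int n + 1})"
proof -
  obtain SA :: "int \<Rightarrow> int" where SA: "strict_mono SA" "range SA = Collect (junction_col c)"
    "\<And>k. SA (k + 1) - SA k \<in> {int n, int n + 1}"
    using junction_cols_enumeration[OF assms] by blast
  obtain SB :: "int \<Rightarrow> int" where SB: "strict_mono SB" "range SB = Collect (junction_row c)"
    "\<And>k. SB (k + 1) - SB k \<in> {int n, int n + 1}"
    using junction_cols_enumeration[OF assms(1) transpose_config_in_Omega'[OF assms(2)]] by auto
  have "c -` J' n = Collect (junction_col c) \<times> Collect (junction_row c)"
    unfolding set_eq_iff by (simp add: junction_tile_iff[OF assms(2)])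
  with SA SB show ?thesis by (intro exI[of _ SA] exI[of _ SB]) simp
qed

end
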